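(* Let $P$ be any product rule. Let $(f_a)_{a\in\Sigma}$ be a tuple of $P$-finite series and let $g$ be a series with $\delta_ag=f_a$ for all $a\in\Sigma$. Then $g$ is $P$-finite.
   Context: Let $\Sigma$ be a finite alphabet, $\Sigma^*$ the finite words with empty word $\varepsilon$. A series is $f:\Sigma^*\to\mathbb Q$, $f_w=f(w)$; series form a $\mathbb Q$-vector space under pointwise operations with zero $\mathbb 0$. For $a\in\Sigma$, $\delta_af$ is $w\mapsto f(aw)$. Terms over $X$: generated by $u,v::=x\mid 0\mid c\cdot u\mid u+v\mid u*v$. A product rule is a term $P$ over $\{x,\dot x,y,\dot y\}$. The $P$-product $*$ and semantics $[\![u]\!]_\varrho$ are the unique pair with $(f*g)_\varepsilon=f_\varepsilon g_\varepsilon$, $\delta_a(f*g)=[\![P]\!]_{[x\mapsto f,\dot x\mapsto\delta_af,y\mapsto g,\dot y\mapsto\delta_ag]}$, and $[\![\cdot]\!]_\varrho$ interpreting variables via $\varrho$, constructors by zero, scalar multiplication, addition, $*$. $P$-finite: $A(g_1,\dots,g_k)$ is the smallest set of series containing $\mathbb 0,g_1,\dots,g_k$ closed under scalar multiplication, $+$, $*$; $f$ is $P$-finite if there are $g_1=f,\dots,g_k$ with $\delta_ag_i\in A(g_1,\dots,g_k)$ for all $i$ and $a\in\Sigma$. *)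

theory Defs
  imports Main "HOL.Rat"
begin

type_synonym 'a series = "'a list \<Rightarrow> rat"

definition delta :: "'a \<Rightarrow> 'a series \<Rightarrow> 'a series" where
  "delta a f = (\<lambda>w. f (a # w))"

datatype 'v trm = Var 'v | Zero | Scal rat "'v trm" | Plus "'v trm" "'v trm" | Times "'v trm" "'v trm"

text \<open>Variables of a product rule: x, x-dot, y, y-dot.\<close>
datatype pvar = VX | VXd | VY | VYd

fun sem :: "('a series \<Rightarrow> 'a series \<Rightarrow> 'a series) \<Rightarrow> ('v \<Rightarrow> 'a series) \<Rightarrow> 'v trm \<Rightarrow> 'a series" where
  "sem mul \<rho> (Var x) = \<rho> x"
| "sem mul \<rho> Zero = (\<lambda>w. 0)"
| "sem mul \<rho> (Scal c u) = (\<lambda>w. c * sem mul \<rho> u w)"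
| "sem mul \<rho> (Plus u v) = (\<lambda>w. sem mul \<rho> u w + sem mul \<rho> v w)"
| "sem mul \<rho> (Times u v) = mul (sem mul \<rho> u) (sem mul \<rho> v)"

definition prule_env :: "'a \<Rightarrow> 'a series \<Rightarrow> 'a series \<Rightarrow> pvar \<Rightarrow> 'a series" where
  "prule_env a f g = (\<lambda>v. case v of VX \<Rightarrow> f | VXd \<Rightarrow> delta a f | VY \<Rightarrow> g | VYd \<Rightarrow> delta a g)"

definition is_P_product :: "pvar trm \<Rightarrow> ('a series \<Rightarrow> 'a series \<Rightarrow> 'a series) \<Rightarrow> bool" where
  "is_P_product P mul \<longleftrightarrow>
     (\<forall>f g. mul f g [] = f [] * g [] \<and>
            (\<forall>a. delta a (mul f g) = sem mul (prule_env a f g) P))"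

text \<open>The P-product (unique operation satisfying the equations).\<close>
definition pprod :: "pvar trm \<Rightarrow> 'a series \<Rightarrow> 'a series \<Rightarrow> 'a series" where
  "pprod P = (THE mul. is_P_product P mul)"

inductive_set alg :: "pvar trm \<Rightarrow> 'a series set \<Rightarrow> 'a series set" for P G where
  zero: "(\<lambda>w. 0) \<in> alg P G"
| gen: "g \<in> G \<Longrightarrow> g \<in> alg P G"
| scal: "f \<in> alg P G \<Longrightarrow> (\<lambda>w. c * f w) \<in> alg P G"
| add: "f \<in> alg P G \<Longrightarrow> h \<in> alg P G \<Longrightarrow> (\<lambda>w. f w + h w) \<in> alg P G"
| mult: "f \<in> alg P G \<Longrightarrow> h \<in> alg P G \<Longrightarrow> pprod P f h \<in> alg P G"

definition P_finite :: "pvar trm \<Rightarrow> ('a::finite) series \<Rightarrow> bool" where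
  "P_finite P f \<longleftrightarrow>
     (\<exists>gs. gs \<noteq> [] \<and> hd gs = f \<and>
          (\<forall>g\<in>set gs. \<forall>a. delta a g \<in> alg P (set gs)))"

end

theory Submission
  imports Defs
begin

(* Take the union of finite generating sets witnessing P-finiteness of the f a, and add g:
   every derivative of g is some f a, which is a generator, so the enlarged set is again
   closed under derivatives up to the algebra it generates. *)

definition delta_closed :: "pvar trm \<Rightarrow> 'a series set \<Rightarrow> bool" where
  "delta_closed P G \<longleftrightarrow> (\<forall>h\<in>G. \<forall>a. delta a h \<in> alg P G)"

lemma alg_mono: "f \<in> alg P G \<Longrightarrow> G \<subseteq> H \<Longrightarrow> f \<in> alg P H"
  by (induction rule: alg.induct) (auto intro: alg.intros)

lemma P_finite_iff_delta_closed:
  "P_finite P f \<longleftrightarrow> (\<exists>G. finite G \<and> f \<in> G \<and> delta_closed P G)"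
proof
  assume "P_finite P f"
  then obtain gs where "gs \<noteq> []" "hd gs = f" "delta_closed P (set gs)"
    unfolding P_finite_def delta_closed_def by blast
  then show "\<exists>G. finite G \<and> f \<in> G \<and> delta_closed P G"
    by (metis finite_set hd_in_set)
next
  assume "\<exists>G. finite G \<and> f \<in> G \<and> delta_closed P G"
  then obtain G where "finite G" "f \<in> G" "delta_closed P G" by blast
  moreover obtain xs where "set xs = G" using \<open>finite G\<close> finite_list by blast
  ultimately have "set (f # xs) = G" by auto
  with \<open>delta_closed P G\<close> show "P_finite P f"
    unfolding P_finite_def delta_closed_def by (metis list.distinct(1) list.sel(1))
qed

lemma delta_closed_UN:
  assumes "\<And>i. i \<in> I \<Longrightarrow> delta_closed P (G i)"
  shows "delta_closed P (\<Union>i\<in>I. G i)"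
  unfolding delta_closed_def
proof (intro ballI allI)
  fix h a assume "h \<in> (\<Union>i\<in>I. G i)"
  then obtain i where "i \<in> I" "h \<in> G i" by blast
  with assms have "delta a h \<in> alg P (G i)" unfolding delta_closed_def by blast
  then show "delta a h \<in> alg P (\<Union>i\<in>I. G i)"
    by (rule alg_mono) (use \<open>i \<in> I\<close> in blast)
qed

lemma delta_closed_insert:
  assumes "delta_closed P G" and "\<And>a. delta a g \<in> alg P G"
  shows "delta_closed P (insert g G)"
  using assms alg_mono[of _ P G "insert g G"] unfolding delta_closed_def by blast

theorem mainTheorem19:
  fixes P :: "pvar trm"
    and f :: "'a::finite \<Rightarrow> 'a series"
    and g :: "'a series"
  assumes "\<forall>a. P_finite P (f a)"
    and "\<forall>a. delta a g = f a"
  shows "P_finite P g"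
proof -
  obtain G where G: "\<And>a. finite (G a) \<and> f a \<in> G a \<and> delta_closed P (G a)"
    using assms(1) unfolding P_finite_iff_delta_closed by metis
  define H where "H = (\<Union>a. G a)"
  have "finite H" using G by (simp add: H_def)
  have "delta_closed P H" using G by (simp add: H_def delta_closed_UN)
  moreover have "delta a g \<in> alg P H" for a
    using assms(2) G by (auto simp: H_def intro: alg.gen)
  ultimately have "delta_closed P (insert g H)" by (rule delta_closed_insert)
  with \<open>finite H\<close> show ?thesis
    unfolding P_finite_iff_delta_closed by blast
qed

end
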